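(* Let $\mathcal{Q}$ be the exponential family of Gaussian distributions on $\mathbb{R}^d$ with diagonal covariance $\operatorname{diag}(\sigma^2)$, $\sigma^2\in\mathbb{R}^d_{>0}$, with expectation parameter $\omega=(\mu,\sigma^2+\mu\bullet\mu)$, and let $C=\{(\mu,\sigma^2+\mu\bullet\mu)\in\mathbb{R}^d\times\mathbb{R}^d:\mu\in\mathbb{R}^d_{\ge0}\}$. For $\omega=(\mu,\sigma^2+\mu\bullet\mu)$ with $\sigma^2\in\mathbb{R}^d_{>0}$, $\mathrm{proj}^{A^*}_C(\omega)=(\mu_P,\sigma^2+\mu_P\bullet\mu_P)$ where $(\mu_P)_i=\max(0,\mu_i)$ for $i=1,\dots,d$.
   Context: $\bullet$ denotes the entrywise (Hadamard) product. This family is an exponential family with sufficient statistic $\Gamma(x)=(x,x\bullet x)$, natural parameter $\theta=(\mu/\sigma^2,-\frac{1}{2\sigma^2})$ (entrywise), log-partition $A(\theta)=-\frac14\sum_i(\theta_1)_i^2/(\theta_2)_i-\frac12\sum_i\log(-2(\theta_2)_i)$, and expectation parameter $\omega=\nabla A(\theta)=(\mu,\sigma^2+\mu\bullet\mu)$; $A^*$ is the convex conjugate of $A$. $\mathrm{proj}^{A^*}_C(\omega)=\arg\min_{\omega'\in C}\{A^*(\omega')-A^*(\omega)-\langle\nabla A^*(\omega),\omega'-\omega\rangle\}$. *)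

theory Defs
  imports "HOL-Analysis.Analysis"
begin

text \<open>Diagonal Gaussian family on R^d; the dimension d is the finite index type 'd.
  Parameters live in (real^'d) \<times> (real^'d), with the product inner product.\<close>

definition hadamard :: "real^'d \<Rightarrow> real^'d \<Rightarrow> real^'d" (infixl "\<bullet>\<^sub>H" 70) where
  "x \<bullet>\<^sub>H y = (\<chi> i. x $ i * y $ i)"

definition nat_dom :: "((real^'d) \<times> (real^'d)) set" where
  "nat_dom = {\<theta>. \<forall>i. snd \<theta> $ i < 0}"

definition logpart :: "(real^'d) \<times> (real^'d) \<Rightarrow> real" where
  "logpart \<theta> = - (1/4) * (\<Sum>i\<in>UNIV. (fst \<theta> $ i)^2 / (snd \<theta> $ i))
                 - (1/2) * (\<Sum>i\<in>UNIV. ln (-2 * snd \<theta> $ i))"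

text \<open>Convex conjugate A* (A is +\<infinity> outside its domain), extended-real valued.\<close>
definition Astar :: "(real^'d) \<times> (real^'d) \<Rightarrow> ereal" where
  "Astar \<omega> = (SUP \<theta>\<in>nat_dom. ereal (\<theta> \<bullet> \<omega> - logpart \<theta>))"

text \<open>Gradient of A* at \<omega> (of its real-valued version; meaningful where A* is finite and
  differentiable).\<close>
definition grad_Astar :: "(real^'d) \<times> (real^'d) \<Rightarrow> (real^'d) \<times> (real^'d)" where
  "grad_Astar \<omega> = (THE g. ((\<lambda>w. real_of_ereal (Astar w)) has_derivative (\<lambda>h. g \<bullet> h)) (at \<omega>))"

definition bregman_Astar :: "(real^'d) \<times> (real^'d) \<Rightarrow> (real^'d) \<times> (real^'d) \<Rightarrow> real" where
  "bregman_Astar \<omega>' \<omega> = real_of_ereal (Astar \<omega>') - real_of_ereal (Astar \<omega>)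
      - grad_Astar \<omega> \<bullet> (\<omega>' - \<omega>)"

text \<open>Expectation parameter of N(mu, diag(s)).\<close>
definition exp_param :: "real^'d \<Rightarrow> real^'d \<Rightarrow> (real^'d) \<times> (real^'d)" where
  "exp_param \<mu> s = (\<mu>, s + \<mu> \<bullet>\<^sub>H \<mu>)"

definition Cset :: "((real^'d) \<times> (real^'d)) set" where
  "Cset = {exp_param \<mu> s | \<mu> s. (\<forall>i. 0 \<le> \<mu> $ i) \<and> (\<forall>i. 0 < s $ i)}"

definition is_proj_Astar :: "((real^'d) \<times> (real^'d)) set \<Rightarrow> (real^'d) \<times> (real^'d)
    \<Rightarrow> (real^'d) \<times> (real^'d) \<Rightarrow> bool" where
  "is_proj_Astar S \<omega> p \<longleftrightarrow> p \<in> S \<and> (\<forall>w\<in>S. bregman_Astar p \<omega> \<le> bregman_Astar w \<omega>)"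

end

theory Submission
  imports Defs
begin

text \<open>On the moment domain \<open>\<sigma>\<^sup>2 > 0\<close> the supremum defining \<open>A\<^sup>*\<close> is attained coordinatewise at the
  natural parameter \<open>\<theta> = (\<mu>/\<sigma>\<^sup>2, -1/(2\<sigma>\<^sup>2))\<close> (Fenchel-Young with equality), so
  \<open>A\<^sup>*(\<omega>) = -\<Sum>\<^sub>i (1 + ln \<sigma>\<^sub>i\<^sup>2)/2\<close> near \<open>\<omega>\<close> and \<open>\<nabla>A\<^sup>*(\<omega>) = \<theta>\<close>. The Bregman divergence of \<open>A\<^sup>*\<close>
  between two Gaussians is therefore their Kullback-Leibler divergence, a sum over coordinates of
  \<open>(s'/s - 1 - ln (s'/s))/2 + (\<mu>' - \<mu>)\<^sup>2/(2s)\<close>. Over \<open>C\<close> the two terms can be minimised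
  independently: the variance term is nonnegative by \<open>ln x \<le> x - 1\<close> and vanishes only at \<open>s' = s\<close>,
  and the mean term is minimised uniquely by the point \<open>max 0 \<mu>\<close> of the half-line nearest to \<open>\<mu>\<close>.\<close>

definition var_coord :: "(real^'d) \<times> (real^'d) \<Rightarrow> 'd \<Rightarrow> real" where
  "var_coord \<omega> i = snd \<omega> $ i - (fst \<omega> $ i)\<^sup>2"

definition moment_dom :: "((real^'d) \<times> (real^'d)) set" where
  "moment_dom = {\<omega>. \<forall>i. 0 < var_coord \<omega> i}"

definition nat_param :: "(real^'d) \<times> (real^'d) \<Rightarrow> (real^'d) \<times> (real^'d)" where
  "nat_param \<omega> = ((\<chi> i. fst \<omega> $ i / var_coord \<omega> i), (\<chi> i. - 1 / (2 * var_coord \<omega> i)))"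

definition Astar_formula :: "(real^'d) \<times> (real^'d) \<Rightarrow> real" where
  "Astar_formula \<omega> = (\<Sum>i\<in>UNIV. - 1/2 - ln (var_coord \<omega> i) / 2)"

text \<open>\<open>kl_normal m' s' m s\<close> is \<open>KL(N(m', s') \<parallel> N(m, s))\<close>, with variances \<open>s', s\<close>.\<close>
definition kl_normal :: "real \<Rightarrow> real \<Rightarrow> real \<Rightarrow> real \<Rightarrow> real" where
  "kl_normal m' s' m s = (s' / s - 1 - ln (s' / s)) / 2 + (m' - m)\<^sup>2 / (2 * s)"

lemma inner_minus_logpart:
  "\<theta> \<bullet> \<omega> - logpart \<theta> = (\<Sum>i\<in>UNIV. fst \<theta> $ i * fst \<omega> $ i + snd \<theta> $ i * snd \<omega> $ i
      + (fst \<theta> $ i)\<^sup>2 / (4 * snd \<theta> $ i) + ln (-2 * snd \<theta> $ i) / 2)"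
  by (simp add: inner_prod_def inner_vec_def logpart_def sum.distrib sum_distrib_left
      sum_divide_distrib sum_negf algebra_simps)

lemma fenchel_young_coord:
  fixes a b m v :: real
  assumes b: "b < 0" and v: "0 < v - m\<^sup>2"
  shows "a * m + b * v + a\<^sup>2 / (4 * b) + ln (-2 * b) / 2 \<le> - 1/2 - ln (v - m\<^sup>2) / 2"
proof -
  have "a * m + a\<^sup>2 / (4 * b) + b * m\<^sup>2 = (a + 2 * b * m)\<^sup>2 / (4 * b)"
    using b by (simp add: field_simps power2_eq_square)
  also have "\<dots> \<le> 0"
    using b by (simp add: divide_nonneg_neg)
  finally have quadratic: "a * m + a\<^sup>2 / (4 * b) + b * m\<^sup>2 \<le> 0" .
  have "ln (-2 * b) + ln (v - m\<^sup>2) = ln ((-2 * b) * (v - m\<^sup>2))"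
    using b v by (simp add: ln_mult_pos[symmetric])
  also have "\<dots> \<le> (-2 * b) * (v - m\<^sup>2) - 1"
    using b v by (intro ln_le_minus_one) (simp add: mult_neg_pos)
  finally have logarithmic: "ln (-2 * b) + ln (v - m\<^sup>2) \<le> (-2 * b) * (v - m\<^sup>2) - 1" .
  show ?thesis
    using quadratic logarithmic by (simp add: algebra_simps)
qed

lemma fenchel_young_coord_eq:
  fixes m S :: real
  assumes S: "0 < S"
  shows "(m / S) * m + (- 1 / (2 * S)) * (S + m\<^sup>2) + (m / S)\<^sup>2 / (4 * (- 1 / (2 * S)))
         + ln (-2 * (- 1 / (2 * S))) / 2 = - 1/2 - ln S / 2"
proof -
  have "ln (-2 * (- 1 / (2 * S))) = - ln S"
    using S by (simp add: ln_div)
  moreover have "(m / S) * m + (- 1 / (2 * S)) * (S + m\<^sup>2) + (m / S)\<^sup>2 / (4 * (- 1 / (2 * S)))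
      = - 1/2"
    using S by (simp add: field_simps power2_eq_square)
  ultimately show ?thesis by linarith
qed

lemma nat_param_in_nat_dom: "\<omega> \<in> moment_dom \<Longrightarrow> nat_param \<omega> \<in> nat_dom"
  by (simp add: moment_dom_def nat_param_def nat_dom_def)

lemma Astar_eq_Astar_formula:
  fixes \<omega> :: "(real^'d) \<times> (real^'d)"
  assumes "\<omega> \<in> moment_dom"
  shows "Astar \<omega> = ereal (Astar_formula \<omega>)"
  unfolding Astar_def
proof (rule antisym)
  have var: "\<And>i. 0 < var_coord \<omega> i"
    using assms by (simp add: moment_dom_def)
  show "(SUP \<theta>\<in>nat_dom. ereal (\<theta> \<bullet> \<omega> - logpart \<theta>)) \<le> ereal (Astar_formula \<omega>)"
  proof (rule SUP_least)
    fix \<theta> :: "(real^'d) \<times> (real^'d)"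
    assume "\<theta> \<in> nat_dom"
    then have "\<theta> \<bullet> \<omega> - logpart \<theta> \<le> Astar_formula \<omega>"
      unfolding inner_minus_logpart Astar_formula_def
      using var unfolding nat_dom_def var_coord_def
      by (intro sum_mono) (rule fenchel_young_coord; simp)
    then show "ereal (\<theta> \<bullet> \<omega> - logpart \<theta>) \<le> ereal (Astar_formula \<omega>)"
      by simp
  qed
  have "nat_param \<omega> \<bullet> \<omega> - logpart (nat_param \<omega>) = Astar_formula \<omega>"
    unfolding inner_minus_logpart Astar_formula_def
  proof (rule sum.cong[OF refl])
    fix i
    have "snd \<omega> $ i = var_coord \<omega> i + (fst \<omega> $ i)\<^sup>2"
      by (simp add: var_coord_def)
    then show "fst (nat_param \<omega>) $ i * fst \<omega> $ i + snd (nat_param \<omega>) $ i * snd \<omega> $ i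
        + (fst (nat_param \<omega>) $ i)\<^sup>2 / (4 * snd (nat_param \<omega>) $ i)
        + ln (-2 * snd (nat_param \<omega>) $ i) / 2 = - 1/2 - ln (var_coord \<omega> i) / 2"
      unfolding nat_param_def fst_conv snd_conv vec_lambda_beta
      using fenchel_young_coord_eq[OF var[of i], of "fst \<omega> $ i"] by (simp only:)
  qed
  then have "ereal (Astar_formula \<omega>) = ereal (nat_param \<omega> \<bullet> \<omega> - logpart (nat_param \<omega>))"
    by simp
  also have "\<dots> \<le> (SUP \<theta>\<in>nat_dom. ereal (\<theta> \<bullet> \<omega> - logpart \<theta>))"
    by (rule SUP_upper[OF nat_param_in_nat_dom[OF assms]])
  finally show "ereal (Astar_formula \<omega>) \<le> (SUP \<theta>\<in>nat_dom. ereal (\<theta> \<bullet> \<omega> - logpart \<theta>))" .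
qed

lemma open_moment_dom: "open (moment_dom :: ((real^'d) \<times> (real^'d)) set)"
proof -
  have "moment_dom = (\<Inter>i. {\<omega>::(real^'d) \<times> (real^'d). 0 < var_coord \<omega> i})"
    by (auto simp: moment_dom_def)
  moreover have "\<forall>i. open {\<omega>::(real^'d) \<times> (real^'d). 0 < var_coord \<omega> i}"
    unfolding var_coord_def by (intro allI open_Collect_less continuous_intros)
  ultimately show ?thesis
    by (metis finite open_INT)
qed

lemma has_derivative_var_coord:
  "((\<lambda>x. var_coord x i) has_derivative (\<lambda>h. snd h $ i - 2 * fst \<omega> $ i * fst h $ i)) (at \<omega>)"
  unfolding var_coord_def
  by (rule has_derivative_eq_rhs)
     (auto intro!: derivative_eq_intros bounded_linear.has_derivative[OF bounded_linear_vec_nth])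

lemma has_derivative_Astar_formula:
  fixes \<omega> :: "(real^'d) \<times> (real^'d)"
  assumes "\<omega> \<in> moment_dom"
  shows "(Astar_formula has_derivative (\<lambda>h. nat_param \<omega> \<bullet> h)) (at \<omega>)"
proof -
  have var: "\<And>i. 0 < var_coord \<omega> i"
    using assms by (simp add: moment_dom_def)
  have "(Astar_formula has_derivative
      (\<lambda>h. \<Sum>i\<in>UNIV. - ((snd h $ i - 2 * fst \<omega> $ i * fst h $ i) / var_coord \<omega> i / 2))) (at \<omega>)"
    unfolding Astar_formula_def
    by (rule has_derivative_eq_rhs,
        (rule derivative_eq_intros has_derivative_var_coord | simp add: var)+)
       (simp add: field_simps)
  moreover have "(\<lambda>h. \<Sum>i\<in>UNIV. - ((snd h $ i - 2 * fst \<omega> $ i * fst h $ i) / var_coord \<omega> i / 2))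
      = (\<lambda>h. nat_param \<omega> \<bullet> h)"
  proof
    fix h :: "(real^'d) \<times> (real^'d)"
    have "- ((snd h $ i - 2 * fst \<omega> $ i * fst h $ i) / var_coord \<omega> i / 2)
        = fst \<omega> $ i / var_coord \<omega> i * fst h $ i + - 1 / (2 * var_coord \<omega> i) * snd h $ i" for i
      using var[of i] by (simp add: field_simps)
    then show "(\<Sum>i\<in>UNIV. - ((snd h $ i - 2 * fst \<omega> $ i * fst h $ i) / var_coord \<omega> i / 2))
        = nat_param \<omega> \<bullet> h"
      by (simp add: nat_param_def inner_prod_def inner_vec_def sum.distrib[symmetric])
  qed
  ultimately show ?thesis by simp
qed

lemma the_gradient_eq:
  fixes f :: "'a::real_inner \<Rightarrow> real"
  assumes "(f has_derivative (\<lambda>h. g \<bullet> h)) (at x)"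
  shows "(THE g. (f has_derivative (\<lambda>h. g \<bullet> h)) (at x)) = g"
proof (rule the_equality)
  fix g'
  assume "(f has_derivative (\<lambda>h. g' \<bullet> h)) (at x)"
  then have "\<And>h. g' \<bullet> h = g \<bullet> h"
    using has_derivative_unique[OF _ assms] by metis
  then have "(g' - g) \<bullet> (g' - g) = 0"
    by (simp add: inner_diff_left)
  then show "g' = g" by simp
qed (rule assms)

lemma grad_Astar_eq_nat_param:
  fixes \<omega> :: "(real^'d) \<times> (real^'d)"
  assumes "\<omega> \<in> moment_dom"
  shows "grad_Astar \<omega> = nat_param \<omega>"
proof -
  have "((\<lambda>w. real_of_ereal (Astar w)) has_derivative (\<lambda>h. nat_param \<omega> \<bullet> h)) (at \<omega>)"
    using has_derivative_Astar_formula[OF assms] open_moment_dom assms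
    by (rule has_derivative_transform_within_open) (simp add: Astar_eq_Astar_formula)
  then show ?thesis
    unfolding grad_Astar_def by (rule the_gradient_eq)
qed

lemma var_coord_exp_param [simp]: "var_coord (exp_param \<mu> s) i = s $ i"
  by (simp add: var_coord_def exp_param_def hadamard_def power2_eq_square)

lemma exp_param_in_moment_dom: "\<forall>i. 0 < s $ i \<Longrightarrow> exp_param \<mu> s \<in> moment_dom"
  by (simp add: moment_dom_def)

lemma nat_param_exp_param [simp]:
  "nat_param (exp_param \<mu> s) = ((\<chi> i. \<mu> $ i / s $ i), (\<chi> i. - 1 / (2 * s $ i)))"
  unfolding nat_param_def var_coord_exp_param by (simp add: exp_param_def)

lemma Astar_formula_exp_param [simp]:
  "Astar_formula (exp_param \<mu> s) = (\<Sum>i\<in>UNIV. - 1/2 - ln (s $ i) / 2)"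
  by (simp add: Astar_formula_def)

lemma bregman_Astar_exp_param:
  assumes s: "\<forall>i. 0 < s $ i" and s': "\<forall>i. 0 < s' $ i"
  shows "bregman_Astar (exp_param \<mu>' s') (exp_param \<mu> s)
       = (\<Sum>i\<in>UNIV. kl_normal (\<mu>' $ i) (s' $ i) (\<mu> $ i) (s $ i))"
proof -
  have "bregman_Astar (exp_param \<mu>' s') (exp_param \<mu> s)
      = Astar_formula (exp_param \<mu>' s') - Astar_formula (exp_param \<mu> s)
        - nat_param (exp_param \<mu> s) \<bullet> (exp_param \<mu>' s' - exp_param \<mu> s)"
    using exp_param_in_moment_dom[OF s] exp_param_in_moment_dom[OF s']
    by (simp add: bregman_Astar_def Astar_eq_Astar_formula grad_Astar_eq_nat_param)
  also have "\<dots> = (\<Sum>i\<in>UNIV. (- 1/2 - ln (s' $ i) / 2) - (- 1/2 - ln (s $ i) / 2)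
      - ((\<mu> $ i / s $ i) * (\<mu>' $ i - \<mu> $ i)
         + (- 1 / (2 * s $ i)) * ((s' $ i + \<mu>' $ i * \<mu>' $ i) - (s $ i + \<mu> $ i * \<mu> $ i))))"
    unfolding nat_param_exp_param Astar_formula_exp_param
    by (simp add: inner_prod_def inner_vec_def exp_param_def hadamard_def sum_subtractf sum_negf
        sum.distrib)
  also have "\<dots> = (\<Sum>i\<in>UNIV. kl_normal (\<mu>' $ i) (s' $ i) (\<mu> $ i) (s $ i))"
    using s s' by (intro sum.cong refl)
      (simp add: kl_normal_def ln_div field_simps power2_eq_square less_imp_neq[symmetric])
  finally show ?thesis .
qed

lemma sq_dist_max0_le:
  fixes m m' :: real
  assumes "0 \<le> m'"
  shows "(max 0 m - m)\<^sup>2 \<le> (m' - m)\<^sup>2"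
proof (cases "0 \<le> m")
  case False
  then have "(- m)\<^sup>2 \<le> (m' - m)\<^sup>2"
    using assms by (intro power_mono) auto
  with False show ?thesis by simp
qed simp

lemma sq_dist_max0_less:
  fixes m m' :: real
  assumes "0 \<le> m'" and "m' \<noteq> max 0 m"
  shows "(max 0 m - m)\<^sup>2 < (m' - m)\<^sup>2"
proof (cases "0 \<le> m")
  case False
  then have "(- m)\<^sup>2 < (m' - m)\<^sup>2"
    using assms by (intro power_strict_mono) auto
  with False show ?thesis by simp
qed (use assms in simp)

lemma kl_normal_max0_le:
  assumes s: "0 < s" and s': "0 < s'" and m': "0 \<le> m'"
  shows "kl_normal (max 0 m) s m s \<le> kl_normal m' s' m s"
proof -
  have "(s / s - 1 - ln (s / s)) / 2 \<le> (s' / s - 1 - ln (s' / s)) / 2"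
    using ln_le_minus_one[of "s' / s"] s s' by simp
  moreover have "(max 0 m - m)\<^sup>2 / (2 * s) \<le> (m' - m)\<^sup>2 / (2 * s)"
    using s sq_dist_max0_le[OF m'] by (simp add: divide_right_mono)
  ultimately show ?thesis
    unfolding kl_normal_def by (rule add_mono)
qed

lemma kl_normal_max0_less:
  assumes s: "0 < s" and s': "0 < s'" and m': "0 \<le> m'"
    and ne: "s' \<noteq> s \<or> m' \<noteq> max 0 m"
  shows "kl_normal (max 0 m) s m s < kl_normal m' s' m s"
  using ne
proof (elim disjE)
  assume "s' \<noteq> s"
  then have "s' / s \<noteq> 1" using s by simp
  then have "(s / s - 1 - ln (s / s)) / 2 < (s' / s - 1 - ln (s' / s)) / 2"
    using ln_le_minus_one[of "s' / s"] ln_eq_minus_one[of "s' / s"] s s' by fastforce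
  moreover have "(max 0 m - m)\<^sup>2 / (2 * s) \<le> (m' - m)\<^sup>2 / (2 * s)"
    using s sq_dist_max0_le[OF m'] by (simp add: divide_right_mono)
  ultimately show ?thesis
    unfolding kl_normal_def by (rule add_less_le_mono)
next
  assume "m' \<noteq> max 0 m"
  have "(s / s - 1 - ln (s / s)) / 2 \<le> (s' / s - 1 - ln (s' / s)) / 2"
    using ln_le_minus_one[of "s' / s"] s s' by simp
  moreover have "(max 0 m - m)\<^sup>2 / (2 * s) < (m' - m)\<^sup>2 / (2 * s)"
    using s sq_dist_max0_less[OF m' \<open>m' \<noteq> max 0 m\<close>] by (simp add: divide_strict_right_mono)
  ultimately show ?thesis
    unfolding kl_normal_def by (rule add_le_less_mono)
qed

lemma bregman_Astar_proj_le:
  assumes s: "\<forall>i. 0 < s $ i" and s': "\<forall>i. 0 < s' $ i" and "\<forall>i. 0 \<le> \<mu>' $ i"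
  shows "bregman_Astar (exp_param (\<chi> i. max 0 (\<mu> $ i)) s) (exp_param \<mu> s)
       \<le> bregman_Astar (exp_param \<mu>' s') (exp_param \<mu> s)"
  unfolding bregman_Astar_exp_param[OF s s] bregman_Astar_exp_param[OF s s']
  using assms by (intro sum_mono) (simp add: kl_normal_max0_le)

lemma bregman_Astar_proj_less:
  assumes s: "\<forall>i. 0 < s $ i" and s': "\<forall>i. 0 < s' $ i" and "\<forall>i. 0 \<le> \<mu>' $ i"
    and ne: "exp_param \<mu>' s' \<noteq> exp_param (\<chi> i. max 0 (\<mu> $ i)) s"
  shows "bregman_Astar (exp_param (\<chi> i. max 0 (\<mu> $ i)) s) (exp_param \<mu> s)
       < bregman_Astar (exp_param \<mu>' s') (exp_param \<mu> s)"
proof -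
  from ne have "s' \<noteq> s \<or> \<mu>' \<noteq> (\<chi> i. max 0 (\<mu> $ i))"
    by auto
  then obtain i where "s' $ i \<noteq> s $ i \<or> \<mu>' $ i \<noteq> max 0 (\<mu> $ i)"
    by (auto simp: vec_eq_iff)
  then have "kl_normal (max 0 (\<mu> $ i)) (s $ i) (\<mu> $ i) (s $ i)
      < kl_normal (\<mu>' $ i) (s' $ i) (\<mu> $ i) (s $ i)"
    using assms by (simp add: kl_normal_max0_less)
  moreover have "\<forall>i\<in>UNIV. kl_normal (max 0 (\<mu> $ i)) (s $ i) (\<mu> $ i) (s $ i)
      \<le> kl_normal (\<mu>' $ i) (s' $ i) (\<mu> $ i) (s $ i)"
    using assms by (simp add: kl_normal_max0_le)
  ultimately show ?thesis
    unfolding bregman_Astar_exp_param[OF s s] bregman_Astar_exp_param[OF s s']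
    by (intro sum_strict_mono_ex1) auto
qed

theorem proposition15:
  fixes \<mu> s :: "real^'d"
  assumes "\<forall>i. 0 < s $ i"
  shows "is_proj_Astar Cset (exp_param \<mu> s) (exp_param (\<chi> i. max 0 (\<mu> $ i)) s)
       \<and> (\<forall>p. is_proj_Astar Cset (exp_param \<mu> s) p \<longrightarrow> p = exp_param (\<chi> i. max 0 (\<mu> $ i)) s)"
proof -
  let ?P = "exp_param (\<chi> i. max 0 (\<mu> $ i)) s"
  have "?P \<in> Cset"
    unfolding Cset_def using assms by fastforce
  moreover have "bregman_Astar ?P (exp_param \<mu> s) \<le> bregman_Astar w (exp_param \<mu> s)"
    if "w \<in> Cset" for w
    using that assms unfolding Cset_def by (auto intro: bregman_Astar_proj_le)
  moreover have "p = ?P" if proj: "is_proj_Astar Cset (exp_param \<mu> s) p" for p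
  proof (rule ccontr)
    assume "p \<noteq> ?P"
    moreover obtain \<mu>' s' where "p = exp_param \<mu>' s'" "\<forall>i. 0 \<le> \<mu>' $ i" "\<forall>i. 0 < s' $ i"
      using proj unfolding is_proj_Astar_def Cset_def by blast
    ultimately have "bregman_Astar ?P (exp_param \<mu> s) < bregman_Astar p (exp_param \<mu> s)"
      using assms bregman_Astar_proj_less by blast
    with proj \<open>?P \<in> Cset\<close> show False
      unfolding is_proj_Astar_def by fastforce
  qed
  ultimately show ?thesis
    unfolding is_proj_Astar_def by blast
qed

end
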